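(* Let $\varphi:\mathbb R^d\to\mathbb R\cup\{+\infty\}$ be proper, convex, lsc, satisfy property (X) with constant $D$, and suppose that for every $C>0$, $\varphi$ is $C^1$ with Lipschitz continuous derivative $\varphi'$ on $\mathcal D_C(\varphi)$. Then property (U-ii) holds for every $T\in(0,\infty)$: for every $C>0$ and $\alpha_0>0$ there is $R>0$ (depending only on $C$, $\alpha_0$, $T$, $D$ and the Lipschitz constant of $\varphi'$ on $\mathcal D_{DC}(\varphi)$) such that any solutions $\zeta_1,\zeta_2\in W^{1,\infty}(0,T)^d$ of $\alpha_i\dot\zeta_i+\partial\varphi(\zeta_i)\ni g_i$, $\zeta_i(0)=\zeta_{0i}$, with $\zeta_{0i}\in\mathcal D_C(\varphi)$, $\alpha_i\in L^\infty(0,T)$, $\alpha_i\ge\alpha_0$ a.e., $g_i\in L^\infty(0,T)^d$, $|g_i(t)|\le C$ a.e., satisfy for all $t\in(0,T)$ $$\int_0^t|\dot\zeta_1-\dot\zeta_2|\,d\tau+|\zeta_1-\zeta_2|(t)\le R\Big(|\zeta_{01}-\zeta_{02}|+\int_0^t\Big(\Big|\frac1{\alpha_1}-\frac1{\alpha_2}\Big|+|g_1-g_2|\Big)d\tau\Big).$$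
   Context: $\mathcal D_C(\varphi)=\{\chi\in\mathrm{dom}\,\varphi:\exists\xi\in\partial\varphi(\chi),|\xi|\le C\}$. Property (X) with constant $D>0$: for every $C>0$, every $\zeta_0\in\mathcal D_C(\varphi)$, every $\alpha\in L^\infty_{loc}(0,\infty)$ with $\alpha\ge\alpha_0>0$ a.e., and every $g\in L^\infty(0,\infty)^d$ with $|g|\le C$ a.e., the solution of $\alpha\zeta_t+\partial\varphi(\zeta)\ni g$ a.e., $\zeta(0)=\zeta_0$, satisfies $|g(t)-\alpha(t)\zeta_t(t)|\le DC$ a.e. *)

theory Defs
  imports "HOL-Analysis.Analysis"
begin

definition effdom :: "('a \<Rightarrow> ereal) \<Rightarrow> 'a set" where
  "effdom \<phi> = {x. \<phi> x < \<infinity>}"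

definition proper_fun :: "('a \<Rightarrow> ereal) \<Rightarrow> bool" where
  "proper_fun \<phi> \<longleftrightarrow> (\<exists>x. \<phi> x < \<infinity>) \<and> (\<forall>x. \<phi> x > -\<infinity>)"

definition convex_fun :: "('a::real_vector \<Rightarrow> ereal) \<Rightarrow> bool" where
  "convex_fun \<phi> \<longleftrightarrow> (\<forall>x y (l::real). 0 < l \<and> l < 1 \<longrightarrow>
      \<phi> ((1 - l) *\<^sub>R x + l *\<^sub>R y) \<le> ereal (1 - l) * \<phi> x + ereal l * \<phi> y)"

definition lsc_fun :: "('a::topological_space \<Rightarrow> ereal) \<Rightarrow> bool" where
  "lsc_fun \<phi> \<longleftrightarrow> (\<forall>x. \<phi> x \<le> Liminf (at x) \<phi>)"

definition subdiff :: "('a::real_inner \<Rightarrow> ereal) \<Rightarrow> 'a \<Rightarrow> 'a set" where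
  "subdiff \<phi> x = {\<xi>. \<phi> x < \<infinity> \<and> (\<forall>y. \<phi> x + ereal (\<xi> \<bullet> (y - x)) \<le> \<phi> y)}"

definition DC :: "real \<Rightarrow> ('a::real_inner \<Rightarrow> ereal) \<Rightarrow> 'a set" where
  "DC C \<phi> = {z. z \<in> effdom \<phi> \<and> (\<exists>\<xi>\<in>subdiff \<phi> z. norm \<xi> \<le> C)}"

text \<open>\<open>\<zeta> \<in> W^{1,\<infinity>}(0,T)\<close> with (a.e. defined) derivative \<open>\<zeta>'\<close>:
  \<open>\<zeta>'\<close> is essentially bounded and measurable on \<open>(0,T)\<close> and
  \<open>\<zeta>(t) = \<zeta>(0) + \<integral>\<^sub>0\<^sup>t \<zeta>'\<close> for \<open>t \<in> [0,T]\<close>.\<close>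
definition W1inf :: "real \<Rightarrow> (real \<Rightarrow> 'a::euclidean_space) \<Rightarrow> (real \<Rightarrow> 'a) \<Rightarrow> bool" where
  "W1inf T \<zeta> \<zeta>' \<longleftrightarrow>
     \<zeta>' \<in> borel_measurable (lebesgue_on {0..T}) \<and>
     (\<exists>M. AE t in lebesgue_on {0..T}. norm (\<zeta>' t) \<le> M) \<and>
     (\<forall>t\<in>{0..T}. \<zeta> t = \<zeta> 0 + (LINT s:{0..t}|lebesgue. \<zeta>' s))"

definition is_sol :: "('a::euclidean_space \<Rightarrow> ereal) \<Rightarrow> real \<Rightarrow> (real \<Rightarrow> real) \<Rightarrow> (real \<Rightarrow> 'a)
    \<Rightarrow> 'a \<Rightarrow> (real \<Rightarrow> 'a) \<Rightarrow> (real \<Rightarrow> 'a) \<Rightarrow> bool" where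
  "is_sol \<phi> T \<alpha> g \<zeta>0 \<zeta> \<zeta>' \<longleftrightarrow>
     W1inf T \<zeta> \<zeta>' \<and> \<zeta> 0 = \<zeta>0 \<and>
     (AE t in lebesgue_on {0..T}. g t - \<alpha> t *\<^sub>R \<zeta>' t \<in> subdiff \<phi> (\<zeta> t))"

text \<open>Property (X) with constant \<open>D\<close>; solutions on \<open>(0,\<infinity>)\<close> are taken in
  \<open>W^{1,\<infinity>}_{loc}\<close>, i.e. solutions on every \<open>(0,T)\<close>.\<close>
definition propX :: "('a::euclidean_space \<Rightarrow> ereal) \<Rightarrow> real \<Rightarrow> bool" where
  "propX \<phi> D \<longleftrightarrow> D > 0 \<and>
    (\<forall>C>0. \<forall>\<zeta>0\<in>DC C \<phi>. \<forall>(\<alpha>::real\<Rightarrow>real) (\<alpha>0::real) (g::real\<Rightarrow>'a) \<zeta> \<zeta>'.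
       (\<alpha> \<in> borel_measurable (lebesgue_on {0<..}) \<and>
        (\<forall>T>0. \<exists>M. AE t in lebesgue_on {0<..T}. \<bar>\<alpha> t\<bar> \<le> M) \<and>
        \<alpha>0 > 0 \<and> (AE t in lebesgue_on {0<..}. \<alpha> t \<ge> \<alpha>0) \<and>
        g \<in> borel_measurable (lebesgue_on {0<..}) \<and>
        (AE t in lebesgue_on {0<..}. norm (g t) \<le> C) \<and>
        (\<forall>T>0. is_sol \<phi> T \<alpha> g \<zeta>0 \<zeta> \<zeta>'))
       \<longrightarrow> (AE t in lebesgue_on {0<..}. norm (g t - \<alpha> t *\<^sub>R \<zeta>' t) \<le> D * C))"

definition C1_lip_on_DC :: "('a::euclidean_space \<Rightarrow> ereal) \<Rightarrow> ('a \<Rightarrow> 'a) \<Rightarrow> bool" where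
  "C1_lip_on_DC \<phi> \<phi>' \<longleftrightarrow>
    (\<forall>C>0. (\<forall>z\<in>DC C \<phi>. z \<in> interior (effdom \<phi>) \<and>
               ((\<lambda>y. real_of_ereal (\<phi> y)) has_derivative (\<lambda>h. \<phi>' z \<bullet> h)) (at z)) \<and>
           continuous_on (DC C \<phi>) \<phi>' \<and>
           (\<exists>L. \<forall>x\<in>DC C \<phi>. \<forall>y\<in>DC C \<phi>. norm (\<phi>' x - \<phi>' y) \<le> L * norm (x - y)))"

end

theory Submission
  imports Defs
begin

text \<open>
  For two solutions with admissible data, property (X)
  bounds the selected subgradients \<open>g\<^sub>i - \<alpha>\<^sub>i \<zeta>\<^sub>i'\<close> by \<open>D C\<close>.  On \<open>D_{D C}(\<phi>)\<close> the subdifferential is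
  the Lipschitz gradient \<open>\<phi>'\<close>, so solving the inclusions for the velocities gives the pointwise bound
  \<open>|\<zeta>1' - \<zeta>2'| \<le> K (|1/\<alpha>1 - 1/\<alpha>2| + |g1 - g2|) + (L/\<alpha>0) |\<zeta>1 - \<zeta>2|\<close>.  Since
  \<open>|\<zeta>1 - \<zeta>2|(s) \<le> |\<zeta>1(0) - \<zeta>2(0)| + \<integral>|\<zeta>1' - \<zeta>2'|\<close> over \<open>[0,s]\<close>, an integral Gronwall inequality
  yields the estimate.

  Property (X) speaks about solutions on the whole half-line, whereas our solutions live on \<open>[0,T]\<close>.
\<close>

lemma AE_on_mono:
  assumes "AE x in lebesgue_on S. P x" "\<And>x. x \<in> S \<Longrightarrow> P x \<Longrightarrow> Q x"
  shows "AE x in lebesgue_on S. Q x"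
proof (rule AE_mp[OF assms(1)], rule AE_I2)
  fix x assume "x \<in> space (lebesgue_on S)"
  then show "P x \<longrightarrow> Q x" using assms(2) by simp
qed

lemma set_integrable_bounded:
  fixes f :: "real \<Rightarrow> 'b::{banach, second_countable_topology}"
  assumes "f \<in> borel_measurable (lebesgue_on {a..b})"
    and "AE x in lebesgue_on {a..b}. norm (f x) \<le> M"
    and "S \<subseteq> {a..b}" "S \<in> sets lebesgue"
  shows "set_integrable lebesgue S f"
proof -
  interpret finite_measure "lebesgue_on {a..b}"
    by (rule finite_measure_lebesgue_on) auto
  have "integrable (lebesgue_on {a..b}) f"
    using integrable_const_bound assms by blast
  then have "set_integrable lebesgue {a..b} f"
    by (simp add: integrable_restrict_space set_integrable_def)
  then show ?thesis using set_integrable_subset assms by blast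
qed

lemma set_integrable_imp_measurable_on:
  fixes f :: "real \<Rightarrow> 'b::{banach, second_countable_topology}"
  assumes "set_integrable lebesgue S f" "S \<in> sets lebesgue"
  shows "f \<in> borel_measurable (lebesgue_on S)"
  using assms unfolding set_integrable_def
  by (subst borel_measurable_restrict_space_iff) (auto dest: borel_measurable_integrable)

text \<open>Almost-everywhere statements pull back along any map that has a differentiable left inverse,
  because such a left inverse maps null sets to null sets.\<close>

lemma AE_pullback:
  fixes f h :: "real \<Rightarrow> real"
  assumes ae: "AE t in lebesgue_on A. P t" and A: "A \<in> sets lebesgue" and B: "B \<in> sets lebesgue"
    and f: "\<And>s. s \<in> B \<Longrightarrow> f s \<in> A'" and A': "A' \<subseteq> A"
    and h: "h differentiable_on A'" and inverse: "\<And>s. s \<in> B \<Longrightarrow> h (f s) = s"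
  shows "AE s in lebesgue_on B. P (f s)"
proof -
  have "AE t in lebesgue. t \<in> A \<longrightarrow> P t" using ae A by (simp add: AE_restrict_space_iff)
  then obtain N where N: "{t \<in> space lebesgue. \<not> (t \<in> A \<longrightarrow> P t)} \<subseteq> N" "N \<in> null_sets lebesgue"
    unfolding eventually_ae_filter by blast
  have "negligible (N \<inter> A')"
    using N(2) negligible_iff_null_sets negligible_subset by (metis inf_le1)
  then have neg: "negligible (h ` (N \<inter> A'))"
    by (intro negligible_differentiable_image_negligible) (auto intro: differentiable_on_subset[OF h])
  have exceptional: "{s \<in> space lebesgue. \<not> (s \<in> B \<longrightarrow> P (f s))} \<subseteq> h ` (N \<inter> A')"
  proof
    fix s assume "s \<in> {s \<in> space lebesgue. \<not> (s \<in> B \<longrightarrow> P (f s))}"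
    then have s: "s \<in> B" "\<not> P (f s)" by auto
    then have "f s \<in> N \<inter> A'" using N(1) f A' by auto
    then show "s \<in> h ` (N \<inter> A')" using inverse[OF s(1)] by (metis image_eqI)
  qed
  have "AE s in lebesgue. s \<in> B \<longrightarrow> P (f s)"
    by (rule AE_I'[OF _ exceptional]) (use neg negligible_iff_null_sets in auto)
  then show ?thesis using B by (simp add: AE_restrict_space_iff)
qed

definition squeeze :: "real \<Rightarrow> real \<Rightarrow> real" where
  "squeeze T s = T * (1 - exp (- s))"

definition unsqueeze :: "real \<Rightarrow> real \<Rightarrow> real" where
  "unsqueeze T t = - ln (1 - t / T)"

lemma squeeze_0 [simp]: "squeeze T 0 = 0"
  by (simp add: squeeze_def)

lemma squeeze_has_derivative:
  "(squeeze T has_real_derivative T * exp (- s)) (at s within X)"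
  unfolding squeeze_def by (auto intro!: derivative_eq_intros)

lemma squeeze_differentiable: "squeeze T differentiable_on X"
  using squeeze_has_derivative unfolding differentiable_on_def differentiable_def
    has_field_derivative_def by blast

lemma unsqueeze_squeeze: "T > 0 \<Longrightarrow> unsqueeze T (squeeze T s) = s"
  unfolding squeeze_def unsqueeze_def by simp

lemma squeeze_unsqueeze: "T > 0 \<Longrightarrow> t < T \<Longrightarrow> squeeze T (unsqueeze T t) = t"
  unfolding squeeze_def unsqueeze_def by (simp add: field_simps)

lemma unsqueeze_differentiable:
  assumes "T > 0" shows "unsqueeze T differentiable_on {..<T}"
  unfolding differentiable_on_def
proof
  fix t assume "t \<in> {..<T}"
  then have "1 - t / T > 0" using assms by (simp add: field_simps)
  then have "(unsqueeze T has_real_derivative inverse (1 - t / T) / T) (at t within {..<T})"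
    unfolding unsqueeze_def using assms by (auto intro!: derivative_eq_intros simp: field_simps)
  then show "unsqueeze T differentiable at t within {..<T}"
    unfolding has_field_derivative_def differentiable_def by blast
qed

lemma unsqueeze_mono:
  assumes "T > 0" "t \<le> u" "u < T" shows "unsqueeze T t \<le> unsqueeze T u"
  using assms unfolding unsqueeze_def by (simp add: field_simps)

lemma unsqueeze_nonneg: "T > 0 \<Longrightarrow> 0 \<le> t \<Longrightarrow> t < T \<Longrightarrow> 0 \<le> unsqueeze T t"
  using unsqueeze_mono[of T 0 t] by (simp add: unsqueeze_def)

lemma unsqueeze_pos: "T > 0 \<Longrightarrow> 0 < t \<Longrightarrow> t < T \<Longrightarrow> 0 < unsqueeze T t"
  unfolding unsqueeze_def by (simp add: field_simps)

lemma squeeze_range: "T > 0 \<Longrightarrow> 0 \<le> s \<Longrightarrow> squeeze T s \<in> {0..<T}"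
  unfolding squeeze_def by auto

lemma squeeze_image_interval:
  assumes T: "T > 0" and s: "0 \<le> s"
  shows "squeeze T ` {0..s} = {0..squeeze T s}"
proof (intro equalityI subsetI)
  fix t assume "t \<in> squeeze T ` {0..s}"
  then show "t \<in> {0..squeeze T s}" using T by (auto simp: squeeze_def)
next
  fix t assume t: "t \<in> {0..squeeze T s}"
  then have tT: "t < T" using squeeze_range[OF T s] by simp
  have "unsqueeze T t \<le> unsqueeze T (squeeze T s)"
    using t squeeze_range[OF T s] by (intro unsqueeze_mono[OF T]) auto
  then have "unsqueeze T t \<le> s" by (simp add: unsqueeze_squeeze[OF T])
  then have "unsqueeze T t \<in> {0..s}" using unsqueeze_nonneg[OF T _ tT] t by simp
  then show "t \<in> squeeze T ` {0..s}" using squeeze_unsqueeze[OF T tT] by force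
qed

lemma squeeze_image_half_line:
  assumes T: "T > 0" shows "squeeze T ` {0<..} = {0<..<T}"
proof (intro equalityI subsetI)
  fix t assume "t \<in> squeeze T ` {0<..}"
  then show "t \<in> {0<..<T}" using T by (auto simp: squeeze_def)
next
  fix t assume t: "t \<in> {0<..<T}"
  then have "unsqueeze T t \<in> {0<..}" using unsqueeze_pos[OF T] by auto
  then show "t \<in> squeeze T ` {0<..}" using squeeze_unsqueeze[OF T] t by force
qed

lemma squeeze_change_of_variables:
  fixes f :: "real \<Rightarrow> 'a::euclidean_space"
  assumes T: "T > 0" and S: "S \<in> sets lebesgue"
    and f: "f absolutely_integrable_on squeeze T ` S"
  shows "(\<lambda>s. (T * exp (- s)) *\<^sub>R f (squeeze T s)) absolutely_integrable_on S"
    and "integral S (\<lambda>s. (T * exp (- s)) *\<^sub>R f (squeeze T s)) = integral (squeeze T ` S) f"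
proof -
  have inj: "inj_on (squeeze T) S"
    using unsqueeze_squeeze[OF T] by (metis inj_on_inverseI)
  have abs: "\<bar>T * exp (- s)\<bar> = T * exp (- s)" for s using T by simp
  have "(\<lambda>s. \<bar>T * exp (- s)\<bar> *\<^sub>R f (squeeze T s)) absolutely_integrable_on S \<and>
      integral S (\<lambda>s. \<bar>T * exp (- s)\<bar> *\<^sub>R f (squeeze T s)) = integral (squeeze T ` S) f"
    by (subst has_absolute_integral_change_of_variables_real[OF S squeeze_has_derivative inj])
      (use f in auto)
  then show "(\<lambda>s. (T * exp (- s)) *\<^sub>R f (squeeze T s)) absolutely_integrable_on S"
    and "integral S (\<lambda>s. (T * exp (- s)) *\<^sub>R f (squeeze T s)) = integral (squeeze T ` S) f"
    unfolding abs by auto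
qed

lemma AE_squeeze_pullback:
  assumes T: "T > 0" and ae: "AE t in lebesgue_on {0..T}. P t"
    and B: "B \<subseteq> {0..}" "B \<in> sets lebesgue"
  shows "AE s in lebesgue_on B. P (squeeze T s)"
proof (rule AE_pullback[OF ae _ B(2), where A'="{0..<T}" and h="unsqueeze T"])
  show "squeeze T s \<in> {0..<T}" if "s \<in> B" for s using squeeze_range[OF T] that B(1) by auto
  show "unsqueeze T differentiable_on {0..<T}"
    by (rule differentiable_on_subset[OF unsqueeze_differentiable[OF T]]) auto
qed (use unsqueeze_squeeze[OF T] in auto)

lemma AE_squeeze_pushforward:
  assumes T: "T > 0" and ae: "AE s in lebesgue_on {0<..}. P (squeeze T s)"
  shows "AE t in lebesgue_on {0..T}. P t"
proof -
  have "AE t in lebesgue_on {0<..<T}. P (squeeze T (unsqueeze T t))"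
  proof (rule AE_pullback[OF ae, where A'="{0<..}" and h="squeeze T"])
    show "unsqueeze T t \<in> {0<..}" if "t \<in> {0<..<T}" for t using unsqueeze_pos[OF T] that by auto
  qed (use squeeze_unsqueeze[OF T] squeeze_differentiable in auto)
  then have "AE t in lebesgue_on {0<..<T}. P t"
    by (rule AE_on_mono) (use squeeze_unsqueeze[OF T] in auto)
  then have "AE t in lebesgue. t \<in> {0<..<T} \<longrightarrow> P t"
    by (simp add: AE_restrict_space_iff)
  moreover have "AE t in lebesgue. t \<notin> {0, T}"
    by (rule AE_I'[where N="{0, T}"]) (auto simp: negligible_iff_null_sets[symmetric])
  ultimately have "AE t in lebesgue. t \<in> {0..T} \<longrightarrow> P t"
    by eventually_elim auto
  then show ?thesis by (simp add: AE_restrict_space_iff)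
qed

lemma squeeze_measurable:
  fixes f :: "real \<Rightarrow> 'a::euclidean_space"
  assumes T: "T > 0" and f: "f \<in> borel_measurable (lebesgue_on {0..T})"
    and bound: "AE t in lebesgue_on {0..T}. norm (f t) \<le> M"
  shows "(\<lambda>s. f (squeeze T s)) \<in> borel_measurable (lebesgue_on {0<..})"
proof -
  have "f absolutely_integrable_on squeeze T ` {0<..}"
    unfolding squeeze_image_half_line[OF T] by (rule set_integrable_bounded[OF f bound]) auto
  then have weighted: "(\<lambda>s. (T * exp (- s)) *\<^sub>R f (squeeze T s)) \<in> borel_measurable (lebesgue_on {0<..})"
    by (intro set_integrable_imp_measurable_on squeeze_change_of_variables(1)[OF T]) auto
  have weight: "(\<lambda>s. exp s / T) \<in> borel_measurable (lebesgue_on {0<..})"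
    by (rule continuous_imp_measurable_on_sets_lebesgue) (use T in \<open>auto intro!: continuous_intros\<close>)
  have "(\<lambda>s. f (squeeze T s)) = (\<lambda>s. (exp s / T) *\<^sub>R ((T * exp (- s)) *\<^sub>R f (squeeze T s)))"
  proof
    fix s
    have "exp s / T * (T * exp (- s)) = 1" using T by (simp add: exp_minus)
    then show "f (squeeze T s) = (exp s / T) *\<^sub>R ((T * exp (- s)) *\<^sub>R f (squeeze T s))"
      by simp
  qed
  then show ?thesis using borel_measurable_scaleR[OF weight weighted] by simp
qed

text \<open>If \<open>\<zeta>\<close> solves the inclusion on \<open>[0,T]\<close> with coefficient \<open>\<alpha>\<close> and forcing \<open>g\<close>, then
  \<open>\<zeta> \<circ> squeeze T\<close> solves it on every bounded interval, with coefficient \<open>\<alpha> \<circ> squeeze T\<close> divided by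
  the derivative of \<open>squeeze T\<close> and forcing \<open>g \<circ> squeeze T\<close>; the selected subgradient is unchanged.\<close>

lemma squeezed_solution:
  fixes \<phi> :: "'a::euclidean_space \<Rightarrow> ereal"
  assumes T: "T > 0" and T': "T' > 0" and sol: "is_sol \<phi> T \<alpha> g \<zeta>0 \<zeta> \<zeta>'"
  shows "is_sol \<phi> T' (\<lambda>s. \<alpha> (squeeze T s) / (T * exp (- s))) (\<lambda>s. g (squeeze T s)) \<zeta>0
           (\<lambda>s. \<zeta> (squeeze T s)) (\<lambda>s. (T * exp (- s)) *\<^sub>R \<zeta>' (squeeze T s))"
proof -
  define \<zeta>s' where "\<zeta>s' = (\<lambda>s. (T * exp (- s)) *\<^sub>R \<zeta>' (squeeze T s))"
  from sol obtain M where \<zeta>'_meas: "\<zeta>' \<in> borel_measurable (lebesgue_on {0..T})"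
    and \<zeta>'_bound: "AE t in lebesgue_on {0..T}. norm (\<zeta>' t) \<le> M"
    and \<zeta>_int: "\<And>t. t \<in> {0..T} \<Longrightarrow> \<zeta> t = \<zeta> 0 + (LINT s:{0..t}|lebesgue. \<zeta>' s)"
    and \<zeta>_0: "\<zeta> 0 = \<zeta>0"
    and incl: "AE t in lebesgue_on {0..T}. g t - \<alpha> t *\<^sub>R \<zeta>' t \<in> subdiff \<phi> (\<zeta> t)"
    unfolding is_sol_def W1inf_def by blast
  have \<zeta>'_int: "\<zeta>' absolutely_integrable_on {0..squeeze T s}" if "0 \<le> s" for s
    by (rule set_integrable_bounded[OF \<zeta>'_meas \<zeta>'_bound]) (use squeeze_range[OF T that] in auto)
  have \<zeta>s'_int: "\<zeta>s' absolutely_integrable_on {0..s}"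
    and \<zeta>s'_integral: "integral {0..s} \<zeta>s' = integral {0..squeeze T s} \<zeta>'" if "0 \<le> s" for s
    using squeeze_change_of_variables[OF T _ \<zeta>'_int[OF that, folded squeeze_image_interval[OF T that]]]
    unfolding \<zeta>s'_def squeeze_image_interval[OF T that] by auto
  have "\<zeta>s' \<in> borel_measurable (lebesgue_on {0..T'})"
    using \<zeta>s'_int[of T'] T' by (intro set_integrable_imp_measurable_on) auto
  moreover have "AE s in lebesgue_on {0..T'}. norm (\<zeta>s' s) \<le> T * M"
    using AE_squeeze_pullback[OF T \<zeta>'_bound, of "{0..T'}"]
  proof (rule AE_on_mono)
    fix s assume s: "s \<in> {0..T'}" and bound: "norm (\<zeta>' (squeeze T s)) \<le> M"
    have "norm (\<zeta>s' s) = T * exp (- s) * norm (\<zeta>' (squeeze T s))"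
      unfolding \<zeta>s'_def using T by simp
    also have "\<dots> \<le> T * 1 * M" using T s bound by (intro mult_mono) auto
    finally show "norm (\<zeta>s' s) \<le> T * M" by simp
  qed auto
  moreover have "\<zeta> (squeeze T s) = \<zeta> (squeeze T 0) + (LINT r:{0..s}|lebesgue. \<zeta>s' r)"
    if "s \<in> {0..T'}" for s
  proof -
    have s: "0 \<le> s" using that by simp
    have "\<zeta> (squeeze T s) = \<zeta> 0 + integral {0..squeeze T s} \<zeta>'"
      using \<zeta>_int[of "squeeze T s"] \<zeta>'_int[OF s] squeeze_range[OF T s]
      by (simp add: set_lebesgue_integral_eq_integral)
    also have "\<dots> = \<zeta> 0 + (LINT r:{0..s}|lebesgue. \<zeta>s' r)"
      using \<zeta>s'_int[OF s] by (simp add: \<zeta>s'_integral[OF s] set_lebesgue_integral_eq_integral)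
    finally show ?thesis by simp
  qed
  moreover have "AE s in lebesgue_on {0..T'}.
      g (squeeze T s) - (\<alpha> (squeeze T s) / (T * exp (- s))) *\<^sub>R \<zeta>s' s \<in> subdiff \<phi> (\<zeta> (squeeze T s))"
    using AE_squeeze_pullback[OF T incl, of "{0..T'}"] T unfolding \<zeta>s'_def by simp
  ultimately show ?thesis
    unfolding is_sol_def W1inf_def \<zeta>s'_def \<zeta>_0 squeeze_0 by blast
qed

lemma squeezed_coefficient:
  assumes T: "T > 0" and \<alpha>0: "\<alpha>0 > 0"
    and \<alpha>_meas: "\<alpha> \<in> borel_measurable (lebesgue_on {0..T})"
    and \<alpha>_bound: "AE t in lebesgue_on {0..T}. \<bar>\<alpha> t\<bar> \<le> M"
    and \<alpha>_lower: "AE t in lebesgue_on {0..T}. \<alpha> t \<ge> \<alpha>0"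
  defines "\<alpha>s \<equiv> \<lambda>s. \<alpha> (squeeze T s) / (T * exp (- s))"
  shows "\<alpha>s \<in> borel_measurable (lebesgue_on {0<..})"
    and "AE s in lebesgue_on {0<..T'}. \<bar>\<alpha>s s\<bar> \<le> M * exp T' / T"
    and "AE s in lebesgue_on {0<..}. \<alpha>s s \<ge> \<alpha>0 / T"
proof -
  have "(\<lambda>s. \<alpha> (squeeze T s)) \<in> borel_measurable (lebesgue_on {0<..})"
    using squeeze_measurable[OF T \<alpha>_meas, of M] \<alpha>_bound by simp
  moreover have "(\<lambda>s. exp s / T) \<in> borel_measurable (lebesgue_on {0<..})"
    by (rule continuous_imp_measurable_on_sets_lebesgue) (use T in \<open>auto intro!: continuous_intros\<close>)
  ultimately have "(\<lambda>s. \<alpha> (squeeze T s) * (exp s / T)) \<in> borel_measurable (lebesgue_on {0<..})"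
    by (rule borel_measurable_times)
  moreover have "\<alpha>s = (\<lambda>s. \<alpha> (squeeze T s) * (exp s / T))"
    unfolding \<alpha>s_def by (simp add: exp_minus field_simps)
  ultimately show "\<alpha>s \<in> borel_measurable (lebesgue_on {0<..})" by simp
  show "AE s in lebesgue_on {0<..T'}. \<bar>\<alpha>s s\<bar> \<le> M * exp T' / T"
    using AE_squeeze_pullback[OF T \<alpha>_bound, of "{0<..T'}"]
  proof (rule AE_on_mono)
    fix s assume s: "s \<in> {0<..T'}" and bound: "\<bar>\<alpha> (squeeze T s)\<bar> \<le> M"
    have "\<bar>\<alpha>s s\<bar> = \<bar>\<alpha> (squeeze T s)\<bar> * exp s / T"
      unfolding \<alpha>s_def using T by (simp add: abs_mult exp_minus field_simps)
    also have "\<dots> \<le> M * exp T' / T"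
      using bound T s by (intro divide_right_mono mult_mono) auto
    finally show "\<bar>\<alpha>s s\<bar> \<le> M * exp T' / T" .
  qed auto
  show "AE s in lebesgue_on {0<..}. \<alpha>s s \<ge> \<alpha>0 / T"
    using AE_squeeze_pullback[OF T \<alpha>_lower, of "{0<..}"]
  proof (rule AE_on_mono)
    fix s assume s: "s \<in> {0<..}" and lower: "\<alpha> (squeeze T s) \<ge> \<alpha>0"
    have "\<alpha>0 / T \<le> \<alpha>0 * exp s / T" using \<alpha>0 T s by (auto intro!: divide_right_mono)
    also have "\<dots> \<le> \<alpha> (squeeze T s) * exp s / T" using lower T by (auto intro!: divide_right_mono)
    also have "\<dots> = \<alpha>s s" unfolding \<alpha>s_def using T by (simp add: exp_minus field_simps)
    finally show "\<alpha>s s \<ge> \<alpha>0 / T" .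
  qed auto
qed

definition admissible :: "('a::euclidean_space \<Rightarrow> ereal) \<Rightarrow> real \<Rightarrow> real \<Rightarrow> real
    \<Rightarrow> 'a \<Rightarrow> (real \<Rightarrow> real) \<Rightarrow> (real \<Rightarrow> 'a) \<Rightarrow> bool" where
  "admissible \<phi> T C \<alpha>0 \<zeta>0 \<alpha> g \<longleftrightarrow>
     \<zeta>0 \<in> DC C \<phi> \<and>
     \<alpha> \<in> borel_measurable (lebesgue_on {0..T}) \<and> (\<exists>M. AE t in lebesgue_on {0..T}. \<bar>\<alpha> t\<bar> \<le> M) \<and>
     (AE t in lebesgue_on {0..T}. \<alpha> t \<ge> \<alpha>0) \<and>
     g \<in> borel_measurable (lebesgue_on {0..T}) \<and> (AE t in lebesgue_on {0..T}. norm (g t) \<le> C)"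

text \<open>We apply (X) to the time-changed
  solution.\<close>

lemma propX_on_interval:
  fixes \<phi> :: "'a::euclidean_space \<Rightarrow> ereal"
  assumes X: "propX \<phi> D" and T: "T > 0" and C: "C > 0" and \<alpha>0: "\<alpha>0 > 0"
    and adm: "admissible \<phi> T C \<alpha>0 \<zeta>0 \<alpha> g" and sol: "is_sol \<phi> T \<alpha> g \<zeta>0 \<zeta> \<zeta>'"
  shows "AE t in lebesgue_on {0..T}. norm (g t - \<alpha> t *\<^sub>R \<zeta>' t) \<le> D * C"
proof -
  from adm obtain M where \<zeta>0: "\<zeta>0 \<in> DC C \<phi>"
    and \<alpha>_meas: "\<alpha> \<in> borel_measurable (lebesgue_on {0..T})"
    and \<alpha>_bound: "AE t in lebesgue_on {0..T}. \<bar>\<alpha> t\<bar> \<le> M"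
    and \<alpha>_lower: "AE t in lebesgue_on {0..T}. \<alpha> t \<ge> \<alpha>0"
    and g_meas: "g \<in> borel_measurable (lebesgue_on {0..T})"
    and g_bound: "AE t in lebesgue_on {0..T}. norm (g t) \<le> C"
    unfolding admissible_def by blast
  define \<alpha>s where "\<alpha>s = (\<lambda>s. \<alpha> (squeeze T s) / (T * exp (- s)))"
  define gs where "gs = (\<lambda>s. g (squeeze T s))"
  define \<zeta>s' where "\<zeta>s' = (\<lambda>s. (T * exp (- s)) *\<^sub>R \<zeta>' (squeeze T s))"
  have \<alpha>s_meas: "\<alpha>s \<in> borel_measurable (lebesgue_on {0<..})"
    and \<alpha>s_bounded: "\<forall>T'>0. \<exists>M. AE s in lebesgue_on {0<..T'}. \<bar>\<alpha>s s\<bar> \<le> M"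
    and \<alpha>s_lower: "AE s in lebesgue_on {0<..}. \<alpha>s s \<ge> \<alpha>0 / T"
    unfolding \<alpha>s_def using squeezed_coefficient[OF T \<alpha>0 \<alpha>_meas \<alpha>_bound \<alpha>_lower] by blast+
  have gs_meas: "gs \<in> borel_measurable (lebesgue_on {0<..})"
    unfolding gs_def by (rule squeeze_measurable[OF T g_meas g_bound])
  have gs_bound: "AE s in lebesgue_on {0<..}. norm (gs s) \<le> C"
    unfolding gs_def by (rule AE_squeeze_pullback[OF T g_bound]) auto
  have "is_sol \<phi> T' \<alpha>s gs \<zeta>0 (\<lambda>s. \<zeta> (squeeze T s)) \<zeta>s'" if "T' > 0" for T'
    unfolding \<alpha>s_def gs_def \<zeta>s'_def by (rule squeezed_solution[OF T that sol])
  moreover have "\<alpha>0 / T > 0" using \<alpha>0 T by simp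
  ultimately have "AE s in lebesgue_on {0<..}. norm (gs s - \<alpha>s s *\<^sub>R \<zeta>s' s) \<le> D * C"
    using X[unfolded propX_def, THEN conjunct2, rule_format, OF C \<zeta>0, of \<alpha>s "\<alpha>0 / T" gs]
      \<alpha>s_meas \<alpha>s_bounded \<alpha>s_lower gs_meas gs_bound by blast
  then have "AE s in lebesgue_on {0<..}.
      norm (g (squeeze T s) - \<alpha> (squeeze T s) *\<^sub>R \<zeta>' (squeeze T s)) \<le> D * C"
    unfolding gs_def \<alpha>s_def \<zeta>s'_def using T by simp
  then show ?thesis by (rule AE_squeeze_pushforward[OF T])
qed

text \<open>At an interior point where a proper function is differentiable, its only subgradient is the
  gradient: along every direction the subgradient inequality yields a local minimum at the point.\<close>

lemma subgradient_eq_gradient: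
  fixes \<phi> :: "'a::euclidean_space \<Rightarrow> ereal"
  assumes finite_below: "\<And>x. \<phi> x > -\<infinity>" and z: "z \<in> interior (effdom \<phi>)"
    and der: "((\<lambda>y. real_of_ereal (\<phi> y)) has_derivative (\<lambda>h. p \<bullet> h)) (at z)"
    and \<xi>: "\<xi> \<in> subdiff \<phi> z"
  shows "\<xi> = p"
proof -
  define f where "f = (\<lambda>y. real_of_ereal (\<phi> y))"
  define v where "v = \<xi> - p"
  define k where "k = (\<lambda>s. f (z + s *\<^sub>R v) - s * (\<xi> \<bullet> v))"
  obtain e where e: "e > 0" "ball z e \<subseteq> effdom \<phi>" using z mem_interior by blast
  have real_valued: "\<phi> y = ereal (f y)" if "y \<in> effdom \<phi>" for y
    using that finite_below[of y] unfolding effdom_def f_def by (cases "\<phi> y") auto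
  \<comment> \<open>Near \<open>z\<close>, \<open>f\<close> lies above the affine function given by the subgradient \<open>\<xi>\<close>.\<close>
  have "k 0 \<le> k s" if "\<bar>0 - s\<bar> < e / (norm v + 1)" for s
  proof -
    have "norm (s *\<^sub>R v) \<le> \<bar>s\<bar> * (norm v + 1)" by (simp add: mult_left_mono)
    also have "\<dots> < e" using that by (simp add: pos_less_divide_eq add_nonneg_pos)
    finally have "z + s *\<^sub>R v \<in> effdom \<phi>" using e by (auto simp: dist_norm)
    moreover have "z \<in> effdom \<phi>" using e by auto
    moreover have "\<phi> z + ereal (\<xi> \<bullet> ((z + s *\<^sub>R v) - z)) \<le> \<phi> (z + s *\<^sub>R v)"
      using \<xi> unfolding subdiff_def by blast
    ultimately show ?thesis unfolding k_def using real_valued by simp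
  qed
  moreover have "(k has_real_derivative p \<bullet> v - \<xi> \<bullet> v) (at 0)"
  proof -
    have "((\<lambda>s. f (z + s *\<^sub>R v)) has_derivative (\<lambda>s. p \<bullet> (s *\<^sub>R v))) (at 0)"
      by (rule has_derivative_compose[where g=f]) (use der in \<open>auto simp: f_def intro!: derivative_eq_intros\<close>)
    moreover have "(\<lambda>s. p \<bullet> (s *\<^sub>R v)) = (*) (p \<bullet> v)" by (auto simp: fun_eq_iff)
    ultimately have "((\<lambda>s. f (z + s *\<^sub>R v)) has_real_derivative p \<bullet> v) (at 0)"
      unfolding has_field_derivative_def by simp
    then show ?thesis unfolding k_def by (auto intro!: derivative_eq_intros)
  qed
  ultimately have "p \<bullet> v - \<xi> \<bullet> v = 0"
    by (intro DERIV_local_min[where d="e / (norm v + 1)"]) (use e in \<open>auto simp: add_nonneg_pos\<close>)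
  then have "v \<bullet> v = 0" unfolding v_def by (simp add: algebra_simps inner_commute)
  then show ?thesis unfolding v_def by simp
qed

lemma set_integral_nonneg_real:
  fixes f :: "real \<Rightarrow> real"
  assumes "set_integrable lebesgue A f" "\<And>x. 0 \<le> f x"
  shows "0 \<le> (LINT x:A|lebesgue. f x)"
  using set_integral_mono[OF _ assms(1), of "\<lambda>_. 0"] assms(2) by simp

lemma set_integral_mono_set_real:
  fixes f :: "real \<Rightarrow> real"
  assumes f: "set_integrable lebesgue B f" and AB: "A \<subseteq> B" "A \<in> sets lebesgue"
    and nonneg: "\<And>x. 0 \<le> f x"
  shows "(LINT x:A|lebesgue. f x) \<le> (LINT x:B|lebesgue. f x)"
proof -
  have "set_integrable lebesgue A f" using set_integrable_subset f AB by blast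
  then show ?thesis
    using f AB nonneg unfolding set_lebesgue_integral_def set_integrable_def
    by (intro integral_mono) (auto simp: indicator_def)
qed

lemma set_integral_split_real:
  fixes f :: "real \<Rightarrow> real"
  assumes f: "set_integrable lebesgue {0..t} f" and s: "0 \<le> s1" "s1 \<le> s2" "s2 \<le> t"
  shows "(LINT x:{0..s2}|lebesgue. f x) = (LINT x:{0..s1}|lebesgue. f x) + (LINT x:{s1<..s2}|lebesgue. f x)"
proof -
  have "{0..s2} = {0..s1} \<union> {s1<..s2}" "{0..s1} \<inter> {s1<..s2} = {}" using s by auto
  moreover have "set_integrable lebesgue {0..s1} f" "set_integrable lebesgue {s1<..s2} f"
    by (rule set_integrable_subset[OF f]; use s in auto)+
  ultimately show ?thesis using set_integral_Un by metis
qed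

text \<open>One step of an integral Gronwall argument for \<open>f s \<le> K a s + lam (\<delta> + \<integral>f)\<close> (integral over
  \<open>[0,s]\<close>): on a subinterval of length at most \<open>1 / (2 lam)\<close> the primitive of \<open>f\<close> at most doubles,
  up to an additive error.\<close>

lemma gronwall_step:
  fixes f a :: "real \<Rightarrow> real"
  assumes f: "set_integrable lebesgue {0..t} f" and a: "set_integrable lebesgue {0..t} a"
    and f_nonneg: "\<And>s. 0 \<le> f s" and a_nonneg: "\<And>s. 0 \<le> a s"
    and K: "0 \<le> K" and lam: "0 \<le> lam" and \<delta>: "0 \<le> \<delta>"
    and bound: "AE s in lebesgue. s \<in> {0..t} \<longrightarrow> f s \<le> K * a s + lam * (\<delta> + (LINT r:{0..s}|lebesgue. f r))"
    and s: "0 \<le> s1" "s1 \<le> s2" "s2 \<le> t" and short: "lam * (s2 - s1) \<le> 1 / 2"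
  shows "(LINT r:{0..s2}|lebesgue. f r)
         \<le> 2 * (LINT r:{0..s1}|lebesgue. f r) + 2 * (K * (LINT r:{0..t}|lebesgue. a r) + lam * t * \<delta>)"
proof -
  define U where "U = (\<lambda>s. LINT r:{0..s}|lebesgue. f r)"
  have U_mono: "U x \<le> U s2" if "0 \<le> x" "x \<le> s2" for x
    unfolding U_def using that s
    by (intro set_integral_mono_set_real[OF set_integrable_subset[OF f] _ _ f_nonneg]) auto
  have U_nonneg: "0 \<le> U x" if "0 \<le> x" "x \<le> t" for x
    unfolding U_def using that
    by (intro set_integral_nonneg_real[OF set_integrable_subset[OF f] f_nonneg]) auto
  have f_piece: "set_integrable lebesgue {s1<..s2} f" and a_piece: "set_integrable lebesgue {s1<..s2} a"
    by (rule set_integrable_subset[OF f], use s in auto) (rule set_integrable_subset[OF a], use s in auto)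
  have const: "set_integrable lebesgue {s1<..s2} (\<lambda>_. c)" for c :: real
    by (intro absolutely_integrable_on_const bounded_set_imp_lmeasurable) auto
  \<comment> \<open>On the short interval the bound is applied with \<open>U\<close> frozen at its right end.\<close>
  have "(LINT x:{s1<..s2}|lebesgue. f x) \<le> (LINT x:{s1<..s2}|lebesgue. K * a x + lam * (\<delta> + U s2))"
  proof (rule set_integral_mono_AE[OF f_piece])
    show "set_integrable lebesgue {s1<..s2} (\<lambda>x. K * a x + lam * (\<delta> + U s2))"
      using a_piece const by (intro set_integral_add(1)) auto
    show "AE x\<in>{s1<..s2} in lebesgue. f x \<le> K * a x + lam * (\<delta> + U s2)"
      using bound
    proof (rule AE_mp[OF _ AE_I2], intro impI)
      fix x assume x: "x \<in> {s1<..s2}"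
        and "x \<in> {0..t} \<longrightarrow> f x \<le> K * a x + lam * (\<delta> + (LINT r:{0..x}|lebesgue. f r))"
      then have "f x \<le> K * a x + lam * (\<delta> + U x)" using s unfolding U_def by auto
      also have "\<dots> \<le> K * a x + lam * (\<delta> + U s2)"
        using U_mono[of x] x s lam by (auto intro!: mult_left_mono)
      finally show "f x \<le> K * a x + lam * (\<delta> + U s2)" .
    qed
  qed
  also have "\<dots> = K * (LINT x:{s1<..s2}|lebesgue. a x) + lam * (s2 - s1) * (\<delta> + U s2)"
    using a_piece const s by (subst set_integral_add(2)) (auto simp: set_integral_const algebra_simps)
  also have "\<dots> \<le> K * (LINT x:{0..t}|lebesgue. a x) + lam * t * \<delta> + (1 / 2) * U s2"
  proof -
    have "K * (LINT x:{s1<..s2}|lebesgue. a x) \<le> K * (LINT x:{0..t}|lebesgue. a x)"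
      using s K by (intro mult_left_mono set_integral_mono_set_real[OF a _ _ a_nonneg]) auto
    moreover have "lam * (s2 - s1) * \<delta> \<le> lam * t * \<delta>"
      using s lam \<delta> by (intro mult_right_mono mult_left_mono) auto
    moreover have "lam * (s2 - s1) * U s2 \<le> (1 / 2) * U s2"
      using short U_nonneg[of s2] s by (intro mult_right_mono) auto
    ultimately show ?thesis by (simp add: distrib_left)
  qed
  finally have "(LINT x:{s1<..s2}|lebesgue. f x)
      \<le> K * (LINT x:{0..t}|lebesgue. a x) + lam * t * \<delta> + (1 / 2) * U s2" .
  moreover have "U s2 = U s1 + (LINT x:{s1<..s2}|lebesgue. f x)"
    unfolding U_def by (rule set_integral_split_real[OF f s])
  moreover have "0 \<le> U s1" using U_nonneg s by simp
  ultimately show ?thesis unfolding U_def distrib_left by linarith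
qed

text \<open>Gronwall inequality in integral form, obtained by iterating the step over \<open>N\<close> pieces.\<close>

lemma integral_gronwall:
  fixes f a :: "real \<Rightarrow> real" and N :: nat
  assumes t: "0 \<le> t" and f: "set_integrable lebesgue {0..t} f" and a: "set_integrable lebesgue {0..t} a"
    and f_nonneg: "\<And>s. 0 \<le> f s" and a_nonneg: "\<And>s. 0 \<le> a s"
    and K: "0 \<le> K" and lam: "0 \<le> lam" and \<delta>: "0 \<le> \<delta>"
    and N: "N > 0" and steps: "lam * t \<le> real N / 2"
    and bound: "AE s in lebesgue. s \<in> {0..t} \<longrightarrow> f s \<le> K * a s + lam * (\<delta> + (LINT r:{0..s}|lebesgue. f r))"
  shows "(LINT r:{0..t}|lebesgue. f r) \<le> 2 ^ (N + 1) * (K * (LINT r:{0..t}|lebesgue. a r) + lam * t * \<delta>)"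
proof -
  define E where "E = K * (LINT r:{0..t}|lebesgue. a r) + lam * t * \<delta>"
  define U where "U = (\<lambda>s. LINT r:{0..s}|lebesgue. f r)"
  have E: "0 \<le> E"
    unfolding E_def using set_integral_nonneg_real[OF a a_nonneg] K lam t \<delta> by simp
  \<comment> \<open>Split \<open>[0,t]\<close> into \<open>N\<close> pieces, on each of which \<open>lam\<close> times the length is at most \<open>1/2\<close>.\<close>
  have "U (real i * t / N) \<le> (2 ^ (i + 1) - 2) * E" if "i \<le> N" for i
    using that
  proof (induction i)
    case 0
    have "U 0 = integral {0..0} f"
      unfolding U_def using set_integrable_subset[OF f] t
      by (intro set_lebesgue_integral_eq_integral(2)) auto
    then show ?case by simp
  next
    case (Suc i)
    have "real (Suc i) * t \<le> real N * t" using Suc.prems t by (intro mult_right_mono) auto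
    then have "real (Suc i) * t / N \<le> t" using N by (simp add: divide_le_eq mult.commute)
    moreover have "real i * t / N \<le> real (Suc i) * t / N"
      using t by (intro divide_right_mono mult_right_mono) auto
    moreover have "lam * (real (Suc i) * t / N - real i * t / N) \<le> 1 / 2"
      using steps N by (simp add: diff_divide_distrib[symmetric] algebra_simps divide_le_eq)
    ultimately have "U (real (Suc i) * t / N) \<le> 2 * U (real i * t / N) + 2 * E"
      unfolding U_def E_def using t
      by (intro gronwall_step[OF f a f_nonneg a_nonneg K lam \<delta> bound]) auto
    also have "\<dots> \<le> 2 * ((2 ^ (i + 1) - 2) * E) + 2 * E" using Suc by simp
    also have "\<dots> = (2 ^ (Suc i + 1) - 2) * E" by (simp add: algebra_simps)
    finally show ?case .
  qed
  from this[of N] have "U t \<le> (2 ^ (N + 1) - 2) * E" using N by simp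
  also have "\<dots> \<le> 2 ^ (N + 1) * E" using E by (simp add: algebra_simps)
  finally show ?thesis unfolding U_def E_def .
qed

lemma W1inf_set_integrable:
  assumes "W1inf T \<zeta> \<zeta>'" "s \<le> T"
  shows "set_integrable lebesgue {0..s} \<zeta>'"
proof -
  from assms(1) obtain M where "\<zeta>' \<in> borel_measurable (lebesgue_on {0..T})"
    "AE t in lebesgue_on {0..T}. norm (\<zeta>' t) \<le> M"
    unfolding W1inf_def by blast
  then show ?thesis by (rule set_integrable_bounded) (use assms(2) in auto)
qed

lemma W1inf_difference_bound:
  assumes W1: "W1inf T \<zeta>1 \<zeta>1'" and W2: "W1inf T \<zeta>2 \<zeta>2'" and s: "s \<in> {0..T}"
  shows "norm (\<zeta>1 s - \<zeta>2 s) \<le> norm (\<zeta>1 0 - \<zeta>2 0) + (LINT r:{0..s}|lebesgue. norm (\<zeta>1' r - \<zeta>2' r))"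
proof -
  have i1: "set_integrable lebesgue {0..s} \<zeta>1'" and i2: "set_integrable lebesgue {0..s} \<zeta>2'"
    using W1inf_set_integrable[OF W1] W1inf_set_integrable[OF W2] s by auto
  have "\<zeta>1 s = \<zeta>1 0 + (LINT r:{0..s}|lebesgue. \<zeta>1' r)" "\<zeta>2 s = \<zeta>2 0 + (LINT r:{0..s}|lebesgue. \<zeta>2' r)"
    using W1 W2 s unfolding W1inf_def by blast+
  then have "\<zeta>1 s - \<zeta>2 s = (\<zeta>1 0 - \<zeta>2 0) + (LINT r:{0..s}|lebesgue. \<zeta>1' r - \<zeta>2' r)"
    by (simp add: set_integral_diff(2)[OF i1 i2])
  then have "norm (\<zeta>1 s - \<zeta>2 s) \<le> norm (\<zeta>1 0 - \<zeta>2 0) + norm (LINT r:{0..s}|lebesgue. \<zeta>1' r - \<zeta>2' r)"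
    by (metis norm_triangle_ineq)
  also have "norm (LINT r:{0..s}|lebesgue. \<zeta>1' r - \<zeta>2' r) \<le> (LINT r:{0..s}|lebesgue. norm (\<zeta>1' r - \<zeta>2' r))"
    by (rule set_integral_norm_bound) (rule set_integral_diff(1)[OF i1 i2])
  finally show ?thesis by simp
qed

definition stability_constant :: "real \<Rightarrow> real \<Rightarrow> real \<Rightarrow> real" where
  "stability_constant K lam T = 1 + 2 ^ (2 * nat \<lceil>lam * T\<rceil> + 3) * (K + lam * T)"

lemma stability_constant_pos: "0 \<le> K \<Longrightarrow> 0 \<le> lam \<Longrightarrow> 0 \<le> T \<Longrightarrow> stability_constant K lam T > 0"
  unfolding stability_constant_def by (simp add: add_pos_nonneg)

lemma pointwise_bound_integral_form:
  fixes \<zeta>1 \<zeta>2 \<zeta>1' \<zeta>2' :: "real \<Rightarrow> 'a::euclidean_space"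
  assumes W1: "W1inf T \<zeta>1 \<zeta>1'" and W2: "W1inf T \<zeta>2 \<zeta>2'" and lam: "0 \<le> lam"
    and pointwise: "AE s in lebesgue_on {0..T}. norm (\<zeta>1' s - \<zeta>2' s) \<le> K * a s + lam * norm (\<zeta>1 s - \<zeta>2 s)"
    and t: "t \<in> {0..T}"
  shows "AE s in lebesgue. s \<in> {0..t} \<longrightarrow> norm (\<zeta>1' s - \<zeta>2' s)
           \<le> K * a s + lam * (norm (\<zeta>1 0 - \<zeta>2 0) + (LINT r:{0..s}|lebesgue. norm (\<zeta>1' r - \<zeta>2' r)))"
proof -
  have "AE s in lebesgue. s \<in> {0..T} \<longrightarrow> norm (\<zeta>1' s - \<zeta>2' s) \<le> K * a s + lam * norm (\<zeta>1 s - \<zeta>2 s)"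
    using pointwise by (simp add: AE_restrict_space_iff)
  then show ?thesis
  proof (rule AE_mp[OF _ AE_I2], intro impI)
    fix s assume s: "s \<in> {0..t}"
      and "s \<in> {0..T} \<longrightarrow> norm (\<zeta>1' s - \<zeta>2' s) \<le> K * a s + lam * norm (\<zeta>1 s - \<zeta>2 s)"
    moreover have "lam * norm (\<zeta>1 s - \<zeta>2 s)
        \<le> lam * (norm (\<zeta>1 0 - \<zeta>2 0) + (LINT r:{0..s}|lebesgue. norm (\<zeta>1' r - \<zeta>2' r)))"
      using W1inf_difference_bound[OF W1 W2] s t lam by (intro mult_left_mono) auto
    ultimately show "norm (\<zeta>1' s - \<zeta>2' s)
        \<le> K * a s + lam * (norm (\<zeta>1 0 - \<zeta>2 0) + (LINT r:{0..s}|lebesgue. norm (\<zeta>1' r - \<zeta>2' r)))"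
      using s t by auto
  qed
qed

lemma stability_from_pointwise_bound:
  fixes \<zeta>1 \<zeta>2 \<zeta>1' \<zeta>2' :: "real \<Rightarrow> 'a::euclidean_space" and a :: "real \<Rightarrow> real"
  assumes W1: "W1inf T \<zeta>1 \<zeta>1'" and W2: "W1inf T \<zeta>2 \<zeta>2'"
    and a: "set_integrable lebesgue {0..T} a" and a_nonneg: "\<And>s. 0 \<le> a s"
    and K: "0 \<le> K" and lam: "0 \<le> lam"
    and pointwise: "AE s in lebesgue_on {0..T}. norm (\<zeta>1' s - \<zeta>2' s) \<le> K * a s + lam * norm (\<zeta>1 s - \<zeta>2 s)"
    and t: "t \<in> {0..T}"
  shows "(LINT r:{0..t}|lebesgue. norm (\<zeta>1' r - \<zeta>2' r)) + norm (\<zeta>1 t - \<zeta>2 t)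
         \<le> stability_constant K lam T * (norm (\<zeta>1 0 - \<zeta>2 0) + (LINT r:{0..t}|lebesgue. a r))"
proof -
  define N :: nat where "N = 2 * nat \<lceil>lam * T\<rceil> + 1"
  define f where "f = (\<lambda>s. norm (\<zeta>1' s - \<zeta>2' s))"
  define \<delta> where "\<delta> = norm (\<zeta>1 0 - \<zeta>2 0)"
  define A where "A = (LINT r:{0..t}|lebesgue. a r)"
  have f_int: "set_integrable lebesgue {0..t} f"
    unfolding f_def using t
    by (intro set_integrable_norm set_integral_diff(1) W1inf_set_integrable[OF W1] W1inf_set_integrable[OF W2]) auto
  have a_int: "set_integrable lebesgue {0..t} a" by (rule set_integrable_subset[OF a]) (use t in auto)
  have A: "0 \<le> A" unfolding A_def by (rule set_integral_nonneg_real[OF a_int a_nonneg])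
  have "AE s in lebesgue. s \<in> {0..t} \<longrightarrow> f s \<le> K * a s + lam * (\<delta> + (LINT r:{0..s}|lebesgue. f r))"
    unfolding f_def \<delta>_def by (rule pointwise_bound_integral_form[OF W1 W2 lam pointwise t])
  moreover have "lam * t \<le> real N / 2"
  proof -
    have "lam * t \<le> lam * T" using t lam by (simp add: mult_left_mono)
    also have "\<dots> \<le> real (nat \<lceil>lam * T\<rceil>)" by linarith
    finally show ?thesis unfolding N_def by simp
  qed
  ultimately have gronwall: "(LINT r:{0..t}|lebesgue. f r) \<le> 2 ^ (N + 1) * (K * A + lam * t * \<delta>)"
    unfolding A_def using t
    by (intro integral_gronwall[OF _ f_int a_int _ a_nonneg K lam]) (auto simp: f_def \<delta>_def N_def)
  have "norm (\<zeta>1 t - \<zeta>2 t) \<le> \<delta> + (LINT r:{0..t}|lebesgue. f r)"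
    unfolding \<delta>_def f_def by (rule W1inf_difference_bound[OF W1 W2 t])
  then have "(LINT r:{0..t}|lebesgue. f r) + norm (\<zeta>1 t - \<zeta>2 t) \<le> \<delta> + 2 ^ (N + 2) * (K * A + lam * t * \<delta>)"
    using gronwall by (simp add: power_add)
  also have "\<dots> \<le> \<delta> + 2 ^ (N + 2) * ((K + lam * T) * (\<delta> + A))"
  proof -
    have "lam * t * \<delta> \<le> lam * T * \<delta>"
      using t lam by (intro mult_right_mono mult_left_mono) (auto simp: \<delta>_def)
    moreover have "(K + lam * T) * (\<delta> + A) = K * A + lam * T * \<delta> + (K * \<delta> + lam * T * A)"
      by (simp add: algebra_simps)
    moreover have "0 \<le> K * \<delta> + lam * T * A" using K lam t A by (simp add: \<delta>_def)
    ultimately have "K * A + lam * t * \<delta> \<le> (K + lam * T) * (\<delta> + A)" by linarith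
    then show ?thesis by simp
  qed
  also have "\<dots> \<le> stability_constant K lam T * (\<delta> + A)"
  proof -
    have "stability_constant K lam T = 1 + 2 ^ (N + 2) * (K + lam * T)"
      unfolding stability_constant_def N_def by (simp add: numeral_eq_Suc)
    then show ?thesis using A by (simp add: algebra_simps)
  qed
  finally show ?thesis unfolding f_def \<delta>_def A_def .
qed

text \<open>A subgradient of norm at most \<open>B\<close> lives on \<open>D_B(\<phi>)\<close>, where the \<open>C\<^sup>1\<close> hypothesis identifies it
  with the gradient \<open>\<phi>'\<close>.\<close>

lemma bounded_subgradient_is_gradient:
  fixes \<phi> :: "'a::euclidean_space \<Rightarrow> ereal"
  assumes proper: "proper_fun \<phi>" and C1: "C1_lip_on_DC \<phi> \<phi>'" and B: "B > 0"
    and \<xi>: "\<xi> \<in> subdiff \<phi> z" and bound: "norm \<xi> \<le> B"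
  shows "z \<in> DC B \<phi>" and "\<xi> = \<phi>' z"
proof -
  show z: "z \<in> DC B \<phi>" using \<xi> bound unfolding DC_def effdom_def subdiff_def by blast
  then have "z \<in> interior (effdom \<phi>)" "((\<lambda>y. real_of_ereal (\<phi> y)) has_derivative (\<lambda>h. \<phi>' z \<bullet> h)) (at z)"
    using C1 B unfolding C1_lip_on_DC_def by blast+
  then show "\<xi> = \<phi>' z" using subgradient_eq_gradient proper \<xi> unfolding proper_fun_def by blast
qed

text \<open>Pointwise algebra: writing \<open>z\<^sub>i = (g\<^sub>i - x\<^sub>i) / a\<^sub>i\<close>, the velocities differ by at most a
  multiple of the data discrepancy plus \<open>1 / a0\<close> times the difference of the subgradients.\<close>

lemma velocity_difference_bound:
  fixes z1 z2 g1 g2 :: "'a::real_normed_vector"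
  assumes a1: "a1 \<ge> a0" and a2: "a2 \<ge> a0" and a0: "a0 > 0"
    and g1: "norm g1 \<le> C" and x1: "norm (g1 - a1 *\<^sub>R z1) \<le> B"
    and lip: "norm ((g1 - a1 *\<^sub>R z1) - (g2 - a2 *\<^sub>R z2)) \<le> L * dz"
  shows "norm (z1 - z2) \<le> (C + B + 1 / a0) * (\<bar>1 / a1 - 1 / a2\<bar> + norm (g1 - g2)) + (L / a0) * dz"
proof -
  define x1 where "x1 = g1 - a1 *\<^sub>R z1"
  define x2 where "x2 = g2 - a2 *\<^sub>R z2"
  define K where "K = C + B + 1 / a0"
  have "z1 - z2 = (1 / a1) *\<^sub>R (g1 - x1) - (1 / a2) *\<^sub>R (g2 - x2)"
    using a1 a2 a0 unfolding x1_def x2_def by simp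
  also have "\<dots> = (1 / a1 - 1 / a2) *\<^sub>R (g1 - x1) + (1 / a2) *\<^sub>R ((g1 - g2) - (x1 - x2))"
    by (simp add: algebra_simps)
  finally have "norm (z1 - z2) \<le> norm ((1 / a1 - 1 / a2) *\<^sub>R (g1 - x1)) + norm ((1 / a2) *\<^sub>R ((g1 - g2) - (x1 - x2)))"
    by (metis norm_triangle_ineq)
  also have "\<dots> = \<bar>1 / a1 - 1 / a2\<bar> * norm (g1 - x1) + (1 / a2) * norm ((g1 - g2) - (x1 - x2))"
    using a2 a0 by simp
  also have "\<dots> \<le> \<bar>1 / a1 - 1 / a2\<bar> * K + (1 / a0) * (norm (g1 - g2) + L * dz)"
  proof (intro add_mono mult_left_mono mult_mono)
    have "norm (g1 - x1) \<le> norm g1 + norm x1" by (rule norm_triangle_ineq4)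
    moreover have "0 < 1 / a0" using a0 by simp
    ultimately show "norm (g1 - x1) \<le> K" using g1 x1[folded x1_def] unfolding K_def by linarith
    have "norm ((g1 - g2) - (x1 - x2)) \<le> norm (g1 - g2) + norm (x1 - x2)" by (rule norm_triangle_ineq4)
    then show "norm ((g1 - g2) - (x1 - x2)) \<le> norm (g1 - g2) + L * dz"
      using lip unfolding x1_def x2_def by simp
  qed (use a2 a0 in \<open>auto simp: frac_le\<close>)
  also have "\<dots> \<le> \<bar>1 / a1 - 1 / a2\<bar> * K + K * norm (g1 - g2) + (L / a0) * dz"
  proof -
    have "1 / a0 \<le> K"
      using norm_ge_zero[of g1] norm_ge_zero[of x1] g1 x1[folded x1_def] unfolding K_def by linarith
    then have "(1 / a0) * norm (g1 - g2) \<le> K * norm (g1 - g2)" by (rule mult_right_mono) simp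
    then show ?thesis by (simp add: algebra_simps)
  qed
  finally show ?thesis unfolding K_def by (simp add: algebra_simps)
qed

lemma solution_velocity_estimate:
  fixes \<phi> :: "'a::euclidean_space \<Rightarrow> ereal"
  assumes proper: "proper_fun \<phi>" and X: "propX \<phi> D" and C1: "C1_lip_on_DC \<phi> \<phi>'"
    and lip: "\<forall>x\<in>DC (D * C) \<phi>. \<forall>y\<in>DC (D * C) \<phi>. norm (\<phi>' x - \<phi>' y) \<le> L * norm (x - y)"
    and T: "T > 0" and C: "C > 0" and \<alpha>0: "\<alpha>0 > 0"
    and adm1: "admissible \<phi> T C \<alpha>0 \<zeta>01 \<alpha>1 g1" and sol1: "is_sol \<phi> T \<alpha>1 g1 \<zeta>01 \<zeta>1 \<zeta>1'"
    and adm2: "admissible \<phi> T C \<alpha>0 \<zeta>02 \<alpha>2 g2" and sol2: "is_sol \<phi> T \<alpha>2 g2 \<zeta>02 \<zeta>2 \<zeta>2'"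
  shows "AE s in lebesgue_on {0..T}. norm (\<zeta>1' s - \<zeta>2' s)
           \<le> (C + D * C + 1 / \<alpha>0) * (\<bar>1 / \<alpha>1 s - 1 / \<alpha>2 s\<bar> + norm (g1 s - g2 s))
             + (max L 0 / \<alpha>0) * norm (\<zeta>1 s - \<zeta>2 s)"
proof -
  have DC: "D * C > 0" using X C unfolding propX_def by simp
  have incl1: "AE s in lebesgue_on {0..T}. g1 s - \<alpha>1 s *\<^sub>R \<zeta>1' s \<in> subdiff \<phi> (\<zeta>1 s)"
    and incl2: "AE s in lebesgue_on {0..T}. g2 s - \<alpha>2 s *\<^sub>R \<zeta>2' s \<in> subdiff \<phi> (\<zeta>2 s)"
    using sol1 sol2 unfolding is_sol_def by blast+
  have lower1: "AE s in lebesgue_on {0..T}. \<alpha>1 s \<ge> \<alpha>0"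
    and lower2: "AE s in lebesgue_on {0..T}. \<alpha>2 s \<ge> \<alpha>0"
    and g1_bound: "AE s in lebesgue_on {0..T}. norm (g1 s) \<le> C"
    using adm1 adm2 unfolding admissible_def by blast+
  \<comment> \<open>By property (X) the subgradients selected by both solutions stay in the ball of radius \<open>D C\<close>,
      where they coincide with the Lipschitz gradient \<open>\<phi>'\<close>.\<close>
  note bound1 = propX_on_interval[OF X T C \<alpha>0 adm1 sol1]
  note bound2 = propX_on_interval[OF X T C \<alpha>0 adm2 sol2]
  from incl1 incl2 bound1 bound2 lower1 lower2 g1_bound show ?thesis
  proof eventually_elim
    case (elim s)
    note grad1 = bounded_subgradient_is_gradient[OF proper C1 DC elim(1,3)]
    note grad2 = bounded_subgradient_is_gradient[OF proper C1 DC elim(2,4)]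
    have "norm ((g1 s - \<alpha>1 s *\<^sub>R \<zeta>1' s) - (g2 s - \<alpha>2 s *\<^sub>R \<zeta>2' s)) \<le> L * norm (\<zeta>1 s - \<zeta>2 s)"
      using lip grad1 grad2 by simp
    also have "\<dots> \<le> max L 0 * norm (\<zeta>1 s - \<zeta>2 s)" by (intro mult_right_mono) auto
    finally show ?case
      by (rule velocity_difference_bound[OF elim(5,6) \<alpha>0 elim(7,3)])
  qed
qed

lemma coefficient_gap_integrable:
  assumes \<alpha>0: "\<alpha>0 > 0"
    and adm1: "admissible \<phi> T C \<alpha>0 \<zeta>01 \<alpha>1 g1" and adm2: "admissible \<phi> T C \<alpha>0 \<zeta>02 \<alpha>2 g2"
  shows "set_integrable lebesgue {0..T} (\<lambda>s. \<bar>1 / \<alpha>1 s - 1 / \<alpha>2 s\<bar> + norm (g1 s - g2 s))"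
proof -
  have inverse: "set_integrable lebesgue {0..T} (\<lambda>s. 1 / \<alpha> s)"
    if \<alpha>_meas: "\<alpha> \<in> borel_measurable (lebesgue_on {0..T})"
      and \<alpha>_lower: "AE s in lebesgue_on {0..T}. \<alpha> s \<ge> \<alpha>0" for \<alpha> :: "real \<Rightarrow> real"
  proof (rule set_integrable_bounded)
    show "(\<lambda>s. 1 / \<alpha> s) \<in> borel_measurable (lebesgue_on {0..T})" using \<alpha>_meas by measurable
    show "AE s in lebesgue_on {0..T}. norm (1 / \<alpha> s) \<le> 1 / \<alpha>0"
      using \<alpha>_lower by (rule AE_on_mono) (use \<alpha>0 in \<open>auto simp: frac_le\<close>)
  qed auto
  have force: "set_integrable lebesgue {0..T} g"
    if "g \<in> borel_measurable (lebesgue_on {0..T})" "AE s in lebesgue_on {0..T}. norm (g s) \<le> C"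
    for g :: "real \<Rightarrow> 'a"
    using that by (rule set_integrable_bounded) auto
  show ?thesis
    using adm1 adm2 unfolding admissible_def
    by (intro set_integral_add(1) set_integrable_abs set_integrable_norm set_integral_diff(1)
        inverse force) auto
qed

lemma solution_stability:
  fixes \<phi> :: "'a::euclidean_space \<Rightarrow> ereal"
  assumes proper: "proper_fun \<phi>" and X: "propX \<phi> D" and C1: "C1_lip_on_DC \<phi> \<phi>'"
    and lip: "\<forall>x\<in>DC (D * C) \<phi>. \<forall>y\<in>DC (D * C) \<phi>. norm (\<phi>' x - \<phi>' y) \<le> L * norm (x - y)"
    and T: "T > 0" and C: "C > 0" and \<alpha>0: "\<alpha>0 > 0"
    and adm1: "admissible \<phi> T C \<alpha>0 \<zeta>01 \<alpha>1 g1" and sol1: "is_sol \<phi> T \<alpha>1 g1 \<zeta>01 \<zeta>1 \<zeta>1'"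
    and adm2: "admissible \<phi> T C \<alpha>0 \<zeta>02 \<alpha>2 g2" and sol2: "is_sol \<phi> T \<alpha>2 g2 \<zeta>02 \<zeta>2 \<zeta>2'"
    and t: "t \<in> {0..T}"
  shows "(LINT \<tau>:{0..t}|lebesgue. norm (\<zeta>1' \<tau> - \<zeta>2' \<tau>)) + norm (\<zeta>1 t - \<zeta>2 t)
         \<le> stability_constant (C + D * C + 1 / \<alpha>0) (max L 0 / \<alpha>0) T * (norm (\<zeta>01 - \<zeta>02) +
              (LINT \<tau>:{0..t}|lebesgue. \<bar>1 / \<alpha>1 \<tau> - 1 / \<alpha>2 \<tau>\<bar> + norm (g1 \<tau> - g2 \<tau>)))"
proof -
  have "\<zeta>1 0 = \<zeta>01" "\<zeta>2 0 = \<zeta>02" and W1: "W1inf T \<zeta>1 \<zeta>1'" and W2: "W1inf T \<zeta>2 \<zeta>2'"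
    using sol1 sol2 unfolding is_sol_def by blast+
  moreover have "0 \<le> C + D * C + 1 / \<alpha>0" "0 \<le> max L 0 / \<alpha>0"
    using X C \<alpha>0 unfolding propX_def by auto
  ultimately show ?thesis
    using stability_from_pointwise_bound[OF W1 W2 coefficient_gap_integrable[OF \<alpha>0 adm1 adm2] _ _ _
        solution_velocity_estimate[OF proper X C1 lip T C \<alpha>0 adm1 sol1 adm2 sol2] t]
    by simp
qed

text \<open>The constant depends only on \<open>C\<close>, \<open>\<alpha>0\<close>, \<open>T\<close>, \<open>D\<close> and \<open>L\<close>.\<close>

theorem proposition3p6:
  fixes T C \<alpha>0 D L :: real
  assumes "T > 0" "C > 0" "\<alpha>0 > 0" "D > 0"
  shows "\<exists>R>0. \<forall>(\<phi>::real^'d \<Rightarrow> ereal) \<phi>'.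
     proper_fun \<phi> \<and> convex_fun \<phi> \<and> lsc_fun \<phi> \<and> propX \<phi> D \<and> C1_lip_on_DC \<phi> \<phi>' \<and>
     (\<forall>x\<in>DC (D * C) \<phi>. \<forall>y\<in>DC (D * C) \<phi>. norm (\<phi>' x - \<phi>' y) \<le> L * norm (x - y))
     \<longrightarrow>
     (\<forall>\<zeta>01 \<zeta>02 \<alpha>1 \<alpha>2 g1 g2 \<zeta>1 \<zeta>1' \<zeta>2 \<zeta>2'.
        \<zeta>01 \<in> DC C \<phi> \<and> \<zeta>02 \<in> DC C \<phi> \<and>
        \<alpha>1 \<in> borel_measurable (lebesgue_on {0..T}) \<and>
        \<alpha>2 \<in> borel_measurable (lebesgue_on {0..T}) \<and>
        (\<exists>M. AE t in lebesgue_on {0..T}. \<bar>\<alpha>1 t\<bar> \<le> M) \<and>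
        (\<exists>M. AE t in lebesgue_on {0..T}. \<bar>\<alpha>2 t\<bar> \<le> M) \<and>
        (AE t in lebesgue_on {0..T}. \<alpha>1 t \<ge> \<alpha>0) \<and>
        (AE t in lebesgue_on {0..T}. \<alpha>2 t \<ge> \<alpha>0) \<and>
        g1 \<in> borel_measurable (lebesgue_on {0..T}) \<and>
        g2 \<in> borel_measurable (lebesgue_on {0..T}) \<and>
        (AE t in lebesgue_on {0..T}. norm (g1 t) \<le> C) \<and>
        (AE t in lebesgue_on {0..T}. norm (g2 t) \<le> C) \<and>
        is_sol \<phi> T \<alpha>1 g1 \<zeta>01 \<zeta>1 \<zeta>1' \<and>
        is_sol \<phi> T \<alpha>2 g2 \<zeta>02 \<zeta>2 \<zeta>2'
        \<longrightarrow>
        (\<forall>t\<in>{0<..<T}.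
           (LINT \<tau>:{0..t}|lebesgue. norm (\<zeta>1' \<tau> - \<zeta>2' \<tau>)) + norm (\<zeta>1 t - \<zeta>2 t)
           \<le> R * (norm (\<zeta>01 - \<zeta>02) +
                 (LINT \<tau>:{0..t}|lebesgue. \<bar>1 / \<alpha>1 \<tau> - 1 / \<alpha>2 \<tau>\<bar> + norm (g1 \<tau> - g2 \<tau>)))))"
proof -
  define R where "R = stability_constant (C + D * C + 1 / \<alpha>0) (max L 0 / \<alpha>0) T"
  have "R > 0" unfolding R_def using assms by (intro stability_constant_pos) auto
  moreover have "(LINT \<tau>:{0..t}|lebesgue. norm (\<zeta>1' \<tau> - \<zeta>2' \<tau>)) + norm (\<zeta>1 t - \<zeta>2 t)
      \<le> R * (norm (\<zeta>01 - \<zeta>02) +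
             (LINT \<tau>:{0..t}|lebesgue. \<bar>1 / \<alpha>1 \<tau> - 1 / \<alpha>2 \<tau>\<bar> + norm (g1 \<tau> - g2 \<tau>)))"
    if "proper_fun \<phi>" "propX \<phi> D" "C1_lip_on_DC \<phi> \<phi>'"
      "\<forall>x\<in>DC (D * C) \<phi>. \<forall>y\<in>DC (D * C) \<phi>. norm (\<phi>' x - \<phi>' y) \<le> L * norm (x - y)"
      "admissible \<phi> T C \<alpha>0 \<zeta>01 \<alpha>1 g1" "is_sol \<phi> T \<alpha>1 g1 \<zeta>01 \<zeta>1 \<zeta>1'"
      "admissible \<phi> T C \<alpha>0 \<zeta>02 \<alpha>2 g2" "is_sol \<phi> T \<alpha>2 g2 \<zeta>02 \<zeta>2 \<zeta>2'" "t \<in> {0<..<T}"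
    for \<phi> :: "real^'d \<Rightarrow> ereal" and \<phi>' \<zeta>01 \<zeta>02 \<alpha>1 \<alpha>2 g1 g2 \<zeta>1 \<zeta>1' \<zeta>2 \<zeta>2' t
    unfolding R_def using that assms by (intro solution_stability) auto
  ultimately show ?thesis unfolding admissible_def by blast
qed

end
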